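(* Let $R\subset S$ be an FCP ring extension which is a $\mathcal P$-extension, with Loewy series $\{S_i\}_{i=0}^n$. Then $R\subset S$ is distributive if and only if $S_i\subset S_{i+1}$ is Boolean for each $0\leq i\leq n-1$. If these conditions hold, then $R\subset S$ has FIP.
   Context: All rings are commutative with identity. $[R,S]$ is the lattice of $R$-subalgebras of $S$ (meet = intersection, join = product). FCP: every chain in $[R,S]$ is finite; FIP: $[R,S]$ is finite. $T\subset U$ minimal means $[T,U]=\{T,U\}$; atoms of $[R,S]$ are $T$ with $R\subset T$ minimal; the socle $\mathcal S[R,S]$ is the product of all atoms. Loewy series: $S_0=R$, $S_{i+1}=\mathcal S[S_i,S]$ while $S_i\neq S$, $n$ least with $S_n=S$. An FCP extension with Loewy series $\{S_i\}_{i=0}^n$ is a $\mathcal P$-extension if $[R,S]=\bigcup_{i=0}^{n-1}[S_i,S_{i+1}]$. Distributive: $[R,S]$ is a distributive lattice; Boolean: distributive and every element has a complement ($T\cap T'=R$, $TT'=S$). *)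

theory Defs
  imports Main
begin

text \<open>Rings are commutative with identity; a ring extension R \<subseteq> S is modelled by two
  unital subrings R \<subseteq> S of an ambient commutative ring (a type of class comm_ring_1).\<close>

definition is_subring :: "'a::comm_ring_1 set \<Rightarrow> bool" where
  "is_subring T \<longleftrightarrow> 0 \<in> T \<and> 1 \<in> T \<and>
     (\<forall>x\<in>T. \<forall>y\<in>T. x + y \<in> T \<and> x - y \<in> T \<and> x * y \<in> T)"

definition interval :: "'a::comm_ring_1 set \<Rightarrow> 'a set \<Rightarrow> 'a set set" where
  "interval A B = {T. is_subring T \<and> A \<subseteq> T \<and> T \<subseteq> B}"

definition gen_subring :: "'a::comm_ring_1 set \<Rightarrow> 'a set" where
  "gen_subring X = \<Inter> {V. is_subring V \<and> X \<subseteq> V}"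

definition ring_prod :: "'a::comm_ring_1 set \<Rightarrow> 'a set \<Rightarrow> 'a set" where
  "ring_prod T U = gen_subring (T \<union> U)"

definition FCP :: "'a::comm_ring_1 set \<Rightarrow> 'a set \<Rightarrow> bool" where
  "FCP A B \<longleftrightarrow> (\<forall>C. C \<subseteq> interval A B \<and> (\<forall>X\<in>C. \<forall>Y\<in>C. X \<subseteq> Y \<or> Y \<subseteq> X) \<longrightarrow> finite C)"

definition FIP :: "'a::comm_ring_1 set \<Rightarrow> 'a set \<Rightarrow> bool" where
  "FIP A B \<longleftrightarrow> finite (interval A B)"

definition minimal_ext :: "'a::comm_ring_1 set \<Rightarrow> 'a set \<Rightarrow> bool" where
  "minimal_ext T U \<longleftrightarrow> T \<subset> U \<and> interval T U = {T, U}"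

definition atoms :: "'a::comm_ring_1 set \<Rightarrow> 'a set \<Rightarrow> 'a set set" where
  "atoms A B = {T \<in> interval A B. minimal_ext A T}"

definition socle :: "'a::comm_ring_1 set \<Rightarrow> 'a set \<Rightarrow> 'a set" where
  "socle A B = gen_subring (A \<union> \<Union> (atoms A B))"

primrec loewy :: "'a::comm_ring_1 set \<Rightarrow> 'a set \<Rightarrow> nat \<Rightarrow> 'a set" where
  "loewy R S 0 = R"
| "loewy R S (Suc i) = (if loewy R S i = S then S else socle (loewy R S i) S)"

definition loewy_length :: "'a::comm_ring_1 set \<Rightarrow> 'a set \<Rightarrow> nat" where
  "loewy_length R S = (LEAST n. loewy R S n = S)"

definition P_ext :: "'a::comm_ring_1 set \<Rightarrow> 'a set \<Rightarrow> bool" where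
  "P_ext R S \<longleftrightarrow> FCP R S \<and> (\<exists>n. loewy R S n = S) \<and>
     interval R S = (\<Union>i<loewy_length R S. interval (loewy R S i) (loewy R S (Suc i)))"

definition distributive_ext :: "'a::comm_ring_1 set \<Rightarrow> 'a set \<Rightarrow> bool" where
  "distributive_ext A B \<longleftrightarrow> (\<forall>T\<in>interval A B. \<forall>U\<in>interval A B. \<forall>V\<in>interval A B.
     T \<inter> ring_prod U V = ring_prod (T \<inter> U) (T \<inter> V))"

definition boolean_ext :: "'a::comm_ring_1 set \<Rightarrow> 'a set \<Rightarrow> bool" where
  "boolean_ext A B \<longleftrightarrow> distributive_ext A B \<and>
     (\<forall>T\<in>interval A B. \<exists>T'\<in>interval A B. T \<inter> T' = A \<and> ring_prod T T' = B)"

end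

theory Submission
  imports Defs
begin

text \<open>
  Let [X,S] be distributive with FCP. An atom a meets any T in [X,S] either in X or inside T,
  and distributivity lets T \<inter> - pass through products of atoms; so T \<inter> (X a1 \<cdots> ak) is the
  product of X and those ai contained in T. Hence no atom lies in the product of the others, so
  there are only finitely many atoms (otherwise their partial products would form an infinite
  chain), and every T between X and the socle is the product of X with the atoms it contains.
  Thus [X, socle X S] is the finite Boolean lattice of subsets of the atoms; applying this to
  each term of the Loewy series gives Boolean layers and, for a \<P>-extension, FIP. Conversely,
  in a \<P>-extension the layers are stacked one above the other, so three intermediate rings
  either lie in one layer, where distributivity holds by assumption, or two of them are
  comparable in a way that makes the distributive law trivial.
\<close>

subsection \<open>Generated subrings and intervals\<close>

lemma is_subring_gen_subring: "is_subring (gen_subring X)"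
  unfolding gen_subring_def is_subring_def by auto

lemma gen_subring_superset: "X \<subseteq> gen_subring X"
  unfolding gen_subring_def by auto

lemma gen_subring_least: "X \<subseteq> V \<Longrightarrow> is_subring V \<Longrightarrow> gen_subring X \<subseteq> V"
  unfolding gen_subring_def by auto

lemma gen_subring_mono: "X \<subseteq> Y \<Longrightarrow> gen_subring X \<subseteq> gen_subring Y"
  unfolding gen_subring_def by auto

lemma gen_subring_eq: "is_subring V \<Longrightarrow> gen_subring V = V"
  using gen_subring_superset gen_subring_least by blast

lemma gen_subring_Un_gen_subring: "gen_subring (P \<union> gen_subring Q) = gen_subring (P \<union> Q)"
proof
  show "gen_subring (P \<union> gen_subring Q) \<subseteq> gen_subring (P \<union> Q)"
    using gen_subring_superset[of "P \<union> Q"] gen_subring_mono[of Q "P \<union> Q"]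
    by (intro gen_subring_least is_subring_gen_subring) blast
  show "gen_subring (P \<union> Q) \<subseteq> gen_subring (P \<union> gen_subring Q)"
    using gen_subring_superset[of Q] by (intro gen_subring_mono) blast
qed

lemma ring_prod_gen_subring: "ring_prod (gen_subring P) (gen_subring Q) = gen_subring (P \<union> Q)"
  unfolding ring_prod_def
  using gen_subring_Un_gen_subring[of "gen_subring P" Q] gen_subring_Un_gen_subring[of Q P]
  by (metis Un_commute)

lemma ring_prod_commute: "ring_prod U V = ring_prod V U"
  unfolding ring_prod_def by (simp add: Un_commute)

lemma ring_prod_absorb: "U \<subseteq> V \<Longrightarrow> is_subring V \<Longrightarrow> ring_prod U V = V"
  unfolding ring_prod_def by (simp add: Un_absorb1 gen_subring_eq)

lemma is_subring_Int: "is_subring A \<Longrightarrow> is_subring B \<Longrightarrow> is_subring (A \<inter> B)"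
  unfolding is_subring_def by auto

lemma interval_mono: "A \<subseteq> A' \<Longrightarrow> B' \<subseteq> B \<Longrightarrow> interval A' B' \<subseteq> interval A B"
  unfolding interval_def by auto

lemma gen_subring_in_interval:
  "A \<subseteq> X \<Longrightarrow> X \<subseteq> B \<Longrightarrow> is_subring B \<Longrightarrow> gen_subring X \<in> interval A B"
  unfolding interval_def using is_subring_gen_subring gen_subring_superset gen_subring_least by blast

lemma distributive_ext_mono:
  "distributive_ext A B \<Longrightarrow> interval A' B' \<subseteq> interval A B \<Longrightarrow> distributive_ext A' B'"
  unfolding distributive_ext_def by (simp add: subset_iff)

lemma FCP_mono: "FCP A B \<Longrightarrow> interval A' B' \<subseteq> interval A B \<Longrightarrow> FCP A' B'"
  unfolding FCP_def by (meson order_trans)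

lemma FCP_no_strict_chain:
  assumes "FCP A B" and "\<And>n. G n \<in> interval A B" and "\<And>n. G n \<subset> G (Suc n)"
  shows False
proof -
  have less: "G m \<subset> G n" if "m < n" for m n
    using lift_Suc_mono_less[of G, OF assms(3) that] .
  have comparable: "G m \<subseteq> G n \<or> G n \<subseteq> G m" for m n
    using less[of m n] less[of n m] by (cases m n rule: linorder_cases) auto
  have "inj G"
  proof (rule injI)
    fix m n assume "G m = G n"
    then show "m = n"
      using less by (metis less_irrefl nat_neq_iff)
  qed
  then have "infinite (range G)"
    using finite_imageD infinite_UNIV_nat by blast
  moreover have "finite (range G)"
    using assms(1) comparable assms(2) unfolding FCP_def by (simp add: image_subset_iff)
  ultimately show False
    by contradiction
qed

lemma Int_ring_prod_distrib_if_comparable: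
  assumes "is_subring T" "is_subring U" "is_subring V"
    and "U \<subseteq> V \<or> V \<subseteq> U \<or> T \<subseteq> U \<or> T \<subseteq> V \<or> (U \<subseteq> T \<and> V \<subseteq> T)"
  shows "T \<inter> ring_prod U V = ring_prod (T \<inter> U) (T \<inter> V)"
proof -
  have TU: "is_subring (T \<inter> U)" and TV: "is_subring (T \<inter> V)"
    using assms(1-3) is_subring_Int by auto
  have T_below: "T \<subseteq> ring_prod U V" if "T \<subseteq> U \<or> T \<subseteq> V"
    using that gen_subring_superset[of "U \<union> V"] unfolding ring_prod_def by blast
  consider "U \<subseteq> V" | "V \<subseteq> U" | "T \<subseteq> U" | "T \<subseteq> V" | "U \<subseteq> T" "V \<subseteq> T"
    using assms(4) by blast
  then show ?thesis
  proof cases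
    case 1
    then show ?thesis using ring_prod_absorb assms(3) TV by (metis Int_mono order_refl)
  next
    case 2
    then show ?thesis using ring_prod_absorb ring_prod_commute assms(2) TU
      by (metis Int_mono order_refl)
  next
    case 3
    then show ?thesis using T_below ring_prod_absorb ring_prod_commute assms(1)
      by (metis Int_absorb2 inf_le1)
  next
    case 4
    then show ?thesis using T_below ring_prod_absorb assms(1)
      by (metis Int_absorb2 inf_le1)
  next
    case 5
    then have "ring_prod U V \<subseteq> T"
      unfolding ring_prod_def using assms(1) by (intro gen_subring_least) auto
    then show ?thesis using 5 by (simp add: Int_absorb1 Int_absorb2)
  qed
qed

subsection \<open>Atoms\<close>

lemma atom_Int_cases:
  assumes "a \<in> atoms X S" "T \<in> interval X S"
  shows "T \<inter> a = X \<or> a \<subseteq> T"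
proof -
  have "T \<inter> a \<in> interval X a"
    using assms is_subring_Int unfolding atoms_def interval_def by auto
  then show ?thesis
    using assms(1) unfolding atoms_def minimal_ext_def by auto
qed

lemma atom_subset_atom_eq:
  assumes "a \<in> atoms X S" "b \<in> atoms X S" "a \<subseteq> b"
  shows "a = b"
proof -
  have "a \<in> interval X b"
    using assms unfolding atoms_def interval_def minimal_ext_def by auto
  then show ?thesis
    using assms(1,2) unfolding atoms_def minimal_ext_def by auto
qed

lemma gen_subring_insert_Union:
  "gen_subring (X \<union> \<Union>(insert a \<A>)) = ring_prod a (gen_subring (X \<union> \<Union>\<A>))"
  unfolding ring_prod_def gen_subring_Un_gen_subring by (rule arg_cong[where f = gen_subring]) auto

lemma distributive_ext_Int_gen_subring_Union:
  assumes D: "distributive_ext X S" and "is_subring S" and T: "T \<in> interval X S"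
    and "finite \<A>" "\<A> \<subseteq> interval X S"
  shows "T \<inter> gen_subring (X \<union> \<Union>\<A>) = gen_subring (X \<union> \<Union>((\<inter>) T ` \<A>))"
  using \<open>finite \<A>\<close> \<open>\<A> \<subseteq> interval X S\<close>
proof (induction \<A> rule: finite_induct)
  case empty
  have "gen_subring X \<subseteq> T"
    using T by (intro gen_subring_least) (auto simp: interval_def)
  then show ?case by auto
next
  case (insert a \<A>)
  let ?G = "gen_subring (X \<union> \<Union>\<A>)"
  have "?G \<in> interval X S"
    using T insert.prems \<open>is_subring S\<close> by (intro gen_subring_in_interval) (auto simp: interval_def)
  then have "T \<inter> ring_prod a ?G = ring_prod (T \<inter> a) (T \<inter> ?G)"
    using D T insert.prems unfolding distributive_ext_def by blast
  also have "\<dots> = ring_prod (T \<inter> a) (gen_subring (X \<union> \<Union>((\<inter>) T ` \<A>)))"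
    using insert by simp
  also have "\<dots> = gen_subring (X \<union> \<Union>((\<inter>) T ` insert a \<A>))"
    using T unfolding ring_prod_def gen_subring_Un_gen_subring interval_def
    by (intro arg_cong[where f = gen_subring]) auto
  finally show ?case
    by (simp only: gen_subring_insert_Union)
qed

lemma distributive_ext_Int_join_atoms:
  assumes "distributive_ext X S" "is_subring S" "T \<in> interval X S"
    and "finite \<A>" "\<A> \<subseteq> atoms X S"
  shows "T \<inter> gen_subring (X \<union> \<Union>\<A>) = gen_subring (X \<union> \<Union>{a \<in> \<A>. a \<subseteq> T})"
proof -
  have "T \<inter> gen_subring (X \<union> \<Union>\<A>) = gen_subring (X \<union> \<Union>((\<inter>) T ` \<A>))"
    using assms atoms_def by (intro distributive_ext_Int_gen_subring_Union) auto
  also have "X \<union> \<Union>((\<inter>) T ` \<A>) = X \<union> \<Union>{a \<in> \<A>. a \<subseteq> T}"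
    using atom_Int_cases[OF _ \<open>T \<in> interval X S\<close>] \<open>\<A> \<subseteq> atoms X S\<close> by blast
  finally show ?thesis .
qed

lemma distributive_FCP_atoms_finite:
  assumes D: "distributive_ext X S" and F: "FCP X S" and "is_subring S" "is_subring X"
  shows "finite (atoms X S)"
proof (rule ccontr)
  assume "infinite (atoms X S)"
  then obtain f :: "nat \<Rightarrow> 'a set" where f: "inj f" "range f \<subseteq> atoms X S"
    using infinite_iff_countable_subset by metis
  define G where "G n = gen_subring (X \<union> \<Union>(f ` {..<n}))" for n
  have f_interval: "f n \<in> interval X S" for n
    using f unfolding atoms_def by auto
  have "G n \<in> interval X S" for n
    unfolding G_def using f_interval \<open>is_subring S\<close>
    by (intro gen_subring_in_interval) (auto simp: interval_def)
  moreover have "G n \<subset> G (Suc n)" for n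
  proof -
    have "G n \<subseteq> G (Suc n)"
      unfolding G_def by (intro gen_subring_mono) auto
    moreover have "f n \<subseteq> G (Suc n)"
      unfolding G_def using gen_subring_superset[of "X \<union> \<Union>(f ` {..<Suc n})"] by auto
    moreover have "f n \<inter> G n = X"
    proof -
      have "\<not> f k \<subseteq> f n" if "k < n" for k
      proof
        assume "f k \<subseteq> f n"
        then have "f k = f n"
          using f by (intro atom_subset_atom_eq) auto
        then show False
          using \<open>inj f\<close> that by (auto dest: injD)
      qed
      then have "{a \<in> f ` {..<n}. a \<subseteq> f n} = {}"
        by auto
      moreover have "f n \<inter> G n = gen_subring (X \<union> \<Union>{a \<in> f ` {..<n}. a \<subseteq> f n})"
        unfolding G_def using f
        by (intro distributive_ext_Int_join_atoms[OF D \<open>is_subring S\<close> f_interval]) auto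
      ultimately show ?thesis
        using gen_subring_eq[OF \<open>is_subring X\<close>] by (metis Sup_empty Un_empty_right)
    qed
    moreover have "f n \<noteq> X"
      using f unfolding atoms_def minimal_ext_def by auto
    ultimately show ?thesis
      by auto
  qed
  ultimately show False
    using FCP_no_strict_chain[OF F] by blast
qed

subsection \<open>The socle layer\<close>

lemma socle_subset: "is_subring S \<Longrightarrow> X \<subseteq> S \<Longrightarrow> socle X S \<subseteq> S"
  unfolding socle_def atoms_def interval_def by (intro gen_subring_least) auto

lemma socle_layer_eq_join_atoms:
  assumes "distributive_ext X S" "FCP X S" "is_subring S" "is_subring X" "X \<subseteq> S"
    and T: "T \<in> interval X (socle X S)"
  shows "T = gen_subring (X \<union> \<Union>{a \<in> atoms X S. a \<subseteq> T})"
proof -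
  have "T \<in> interval X S"
    using T interval_mono[OF order_refl socle_subset] assms(3,5) by blast
  have "T = T \<inter> socle X S"
    using T by (auto simp: interval_def)
  also have "\<dots> = gen_subring (X \<union> \<Union>{a \<in> atoms X S. a \<subseteq> T})"
    unfolding socle_def using distributive_FCP_atoms_finite[OF assms(1-4)]
    by (intro distributive_ext_Int_join_atoms[OF assms(1,3) \<open>T \<in> interval X S\<close>]) auto
  finally show ?thesis .
qed

lemma socle_layer_finite:
  assumes "distributive_ext X S" "FCP X S" "is_subring S" "is_subring X" "X \<subseteq> S"
  shows "finite (interval X (socle X S))"
proof -
  have "interval X (socle X S) \<subseteq> (\<lambda>\<B>. gen_subring (X \<union> \<Union>\<B>)) ` Pow (atoms X S)"
    using socle_layer_eq_join_atoms[OF assms] by blast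
  then show ?thesis
    using distributive_FCP_atoms_finite[OF assms(1-4)] finite_subset by blast
qed

lemma socle_layer_boolean:
  assumes "distributive_ext X S" "FCP X S" "is_subring S" "is_subring X" "X \<subseteq> S"
  shows "boolean_ext X (socle X S)"
proof -
  let ?A = "atoms X S"
  have layer_sub: "interval X (socle X S) \<subseteq> interval X S"
    using interval_mono[OF order_refl socle_subset] assms(3,5) .
  have "\<exists>T'\<in>interval X (socle X S). T \<inter> T' = X \<and> ring_prod T T' = socle X S"
    if T: "T \<in> interval X (socle X S)" for T
  proof -
    define B where "B = {a \<in> ?A. a \<subseteq> T}"
    define T' where "T' = gen_subring (X \<union> \<Union>(?A - B))"
    have "T' \<in> interval X (socle X S)"
      unfolding T'_def socle_def using gen_subring_superset[of "X \<union> \<Union>?A"]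
      by (intro gen_subring_in_interval is_subring_gen_subring) auto
    moreover have "T \<inter> T' = X"
    proof -
      have "T \<inter> T' = gen_subring (X \<union> \<Union>{a \<in> ?A - B. a \<subseteq> T})"
        unfolding T'_def using T layer_sub distributive_FCP_atoms_finite[OF assms(1-4)]
        by (intro distributive_ext_Int_join_atoms[OF assms(1,3)]) auto
      moreover have "{a \<in> ?A - B. a \<subseteq> T} = {}"
        unfolding B_def by blast
      ultimately show ?thesis
        using gen_subring_eq[OF assms(4)] by (metis Sup_empty Un_empty_right)
    qed
    moreover have "ring_prod T T' = socle X S"
    proof -
      have "T = gen_subring (X \<union> \<Union>B)"
        unfolding B_def by (rule socle_layer_eq_join_atoms[OF assms T])
      then have "ring_prod T T' = gen_subring ((X \<union> \<Union>B) \<union> (X \<union> \<Union>(?A - B)))"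
        unfolding T'_def by (simp only: ring_prod_gen_subring)
      also have "\<dots> = socle X S"
        unfolding socle_def B_def by (intro arg_cong[where f = gen_subring]) auto
      finally show ?thesis .
    qed
    ultimately show ?thesis
      by blast
  qed
  moreover have "distributive_ext X (socle X S)"
    using assms(1) layer_sub by (rule distributive_ext_mono)
  ultimately show ?thesis
    unfolding boolean_ext_def by blast
qed

subsection \<open>The Loewy series\<close>

lemma loewy_mono: "i \<le> j \<Longrightarrow> loewy R S i \<subseteq> loewy R S j"
proof (rule lift_Suc_mono_le[of "loewy R S"])
  show "loewy R S n \<subseteq> loewy R S (Suc n)" for n
    using gen_subring_superset[of "loewy R S n \<union> \<Union>(atoms (loewy R S n) S)"]
    by (auto simp: socle_def)
qed

lemma loewy_in_interval:
  assumes "is_subring R" "is_subring S" "R \<subseteq> S"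
  shows "loewy R S i \<in> interval R S"
proof (induction i)
  case 0
  show ?case
    using assms by (simp add: interval_def)
next
  case (Suc i)
  have "socle (loewy R S i) S \<in> interval R S"
    unfolding socle_def using Suc assms(2)
    by (intro gen_subring_in_interval) (auto simp: atoms_def interval_def)
  then show ?case
    using assms by (simp add: interval_def)
qed

lemma loewy_Suc_eq_socle:
  "i < loewy_length R S \<Longrightarrow> loewy R S (Suc i) = socle (loewy R S i) S"
  unfolding loewy_length_def using not_less_Least[of i "\<lambda>n. loewy R S n = S"] by simp

lemma loewy_layers_ordered:
  assumes "i < j" "P \<in> interval (loewy R S i) (loewy R S (Suc i))"
    and "Q \<in> interval (loewy R S j) (loewy R S (Suc j))"
  shows "P \<subseteq> Q"
  using assms loewy_mono[of "Suc i" j R S] by (auto simp: interval_def)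

lemma P_ext_distributive_if_layers_distributive:
  assumes P: "P_ext R S"
    and layers: "\<forall>i < loewy_length R S. distributive_ext (loewy R S i) (loewy R S (Suc i))"
  shows "distributive_ext R S"
  unfolding distributive_ext_def
proof (intro ballI)
  let ?layer = "\<lambda>i. interval (loewy R S i) (loewy R S (Suc i))"
  have cover: "interval R S = (\<Union>i < loewy_length R S. ?layer i)"
    using P unfolding P_ext_def by blast
  fix T U V assume "T \<in> interval R S" "U \<in> interval R S" "V \<in> interval R S"
  then obtain a b c where a: "a < loewy_length R S" "T \<in> ?layer a"
    and b: "b < loewy_length R S" "U \<in> ?layer b"
    and c: "c < loewy_length R S" "V \<in> ?layer c"
    unfolding cover by blast
  show "T \<inter> ring_prod U V = ring_prod (T \<inter> U) (T \<inter> V)"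
  proof (cases "a = b \<and> b = c")
    case True
    then show ?thesis
      using layers a b c unfolding distributive_ext_def by blast
  next
    case False
    then have "U \<subseteq> V \<or> V \<subseteq> U \<or> T \<subseteq> U \<or> T \<subseteq> V \<or> (U \<subseteq> T \<and> V \<subseteq> T)"
      using loewy_layers_ordered a b c by (metis nat_neq_iff)
    moreover have "is_subring T" "is_subring U" "is_subring V"
      using a b c by (auto simp: interval_def)
    ultimately show ?thesis
      using Int_ring_prod_distrib_if_comparable by blast
  qed
qed

theorem theorem8p5:
  fixes R S :: "'a::comm_ring_1 set"
  assumes "is_subring R" and "is_subring S" and "R \<subseteq> S"
    and "FCP R S" and "P_ext R S"
  shows "(distributive_ext R S \<longleftrightarrow>
            (\<forall>i < loewy_length R S. boolean_ext (loewy R S i) (loewy R S (Suc i))))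
         \<and> (distributive_ext R S \<longrightarrow> FIP R S)"
proof -
  let ?n = "loewy_length R S" and ?L = "loewy R S"
  have layer_props: "boolean_ext (?L i) (?L (Suc i)) \<and> finite (interval (?L i) (?L (Suc i)))"
    if D: "distributive_ext R S" and i: "i < ?n" for i
  proof -
    have L: "?L i \<in> interval R S"
      using loewy_in_interval assms(1-3) .
    then have sub: "interval (?L i) S \<subseteq> interval R S"
      by (intro interval_mono) (auto simp: interval_def)
    have "distributive_ext (?L i) S" "FCP (?L i) S"
      using distributive_ext_mono[OF D sub] FCP_mono[OF assms(4) sub] .
    then show ?thesis
      using socle_layer_boolean socle_layer_finite L assms(2) loewy_Suc_eq_socle[OF i]
      by (auto simp: interval_def)
  qed
  have "FIP R S" if "distributive_ext R S"
    using assms(5) layer_props[OF that] unfolding P_ext_def FIP_def by auto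
  moreover have "distributive_ext R S"
    if "\<forall>i < ?n. boolean_ext (?L i) (?L (Suc i))"
    using assms(5) that unfolding boolean_ext_def
    by (intro P_ext_distributive_if_layers_distributive) auto
  ultimately show ?thesis
    using layer_props by blast
qed

end
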